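(* Let $A\subseteq\mathbb{N}$ have natural density $\rho(A)=\lim_{n\to\infty}\kappa_A(n)/n\in[0,1]$. Then $m(A)=\rho(A)\,\omega+o(\omega)$.
   Context: $\mathbb{N}=\{1,2,3,\dots\}$, $\mathbb{N}_0=\mathbb{N}\cup\{0\}$. $\mathbf{No}$ denotes Conway's ordered field of surreal numbers, $\omega=\{0,1,2,\dots\mid\ \}$ its first infinite element. An omnific integer is a surreal $x$ with $x=\{x-1\mid x+1\}$; $\mathbf{Nn}$ (surnatural numbers) is the class of nonnegative omnific integers, $\mathbb{N}_0\subset\mathbf{Nn}$. $o(\omega)$ denotes a surreal $w$ with $w/\omega$ infinitesimal. For $A\subseteq\mathbb{N}$, $\kappa_A(n)=|A\cap\{1,\dots,n\}|$. For $f,g:\mathbb{N}\to\mathbb{N}_0$, $f\overset{\to}{=}g$ means $f(n)=g(n)$ for all $n\ge N$ for some $N$; $f\overset{\to}{<}g$ means $f(n)<g(n)$ for all $n\ge N$ for some $N$. Axiom of Extension (standing assumption): every nondecreasing $f:\mathbb{N}\to\mathbb{N}_0$ has an extension $\hat f:\mathbf{Nn}\to\mathbf{Nn}$ with $\hat f(n)=f(n)$ for $n\in\mathbb{N}$ (constant sequences extend to the same constants, the identity extends to the identity), such that for nondecreasing $f,g$: $f\overset{\to}{=}g\Rightarrow\hat f(\nu)=\hat g(\nu)$ for all $\nu\in\mathbf{Nn}\setminus\mathbb{N}$; $f\overset{\to}{<}g\Rightarrow\hat f(\nu)<\hat g(\nu)$ for all $\nu\in\mathbf{Nn}\setminus\mathbb{N}$;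 and $\widehat{f+g}=\hat f+\hat g$, $\widehat{f\cdot g}=\hat f\cdot\hat g$, $\widehat{f\circ g}=\hat f\circ\hat g$ where defined. The magnum of $A\subseteq\mathbb{N}$ is $m(A):=\hat{\kappa_A}(\omega)$. *)

theory Defs
  imports Complex_Main
begin

text \<open>
  The class of surreal numbers No is a proper class and cannot be a HOL type.
  We therefore work with an abstract ordered field 'a containing the reals
  (via of_real, required to be order preserving), a set Nn of surnatural
  numbers, an element omega, and an extension operator ext.  All structural
  facts assumed below hold in Conway's No with Nn the nonnegative omnific
  integers, omega = {0,1,2,...|}, and the extension operator provided by the
  Axiom of Extension.
\<close>

definition kappa :: "nat set \<Rightarrow> nat \<Rightarrow> nat" where
  "kappa A n = card (A \<inter> {1..n})"

definition surnat_axioms :: "'a::{linordered_field,real_algebra_1} set \<Rightarrow> 'a \<Rightarrow> bool" where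
  "surnat_axioms Nn \<omega> \<longleftrightarrow>
     (\<forall>r s::real. r < s \<longrightarrow> (of_real r :: 'a) < of_real s) \<and>
     (\<forall>n::nat. (of_nat n :: 'a) \<in> Nn) \<and>
     (\<forall>x\<in>Nn. 0 \<le> x) \<and>
     (\<forall>x\<in>Nn. \<forall>y\<in>Nn. x + y \<in> Nn \<and> x * y \<in> Nn) \<and>
     (\<forall>x\<in>Nn. \<forall>y\<in>Nn. x < y \<longrightarrow> x + 1 \<le> y) \<and>
     \<omega> \<in> Nn \<and> (\<forall>n::nat. of_nat n < \<omega>)"

definition ev_eq :: "(nat \<Rightarrow> nat) \<Rightarrow> (nat \<Rightarrow> nat) \<Rightarrow> bool" where
  "ev_eq f g \<longleftrightarrow> (\<exists>N. \<forall>n\<ge>N. f n = g n)"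

definition ev_less :: "(nat \<Rightarrow> nat) \<Rightarrow> (nat \<Rightarrow> nat) \<Rightarrow> bool" where
  "ev_less f g \<longleftrightarrow> (\<exists>N. \<forall>n\<ge>N. f n < g n)"

definition nondecr :: "(nat \<Rightarrow> nat) \<Rightarrow> bool" where
  "nondecr f \<longleftrightarrow> mono_on {1..} f"

definition extension_axioms ::
  "'a::{linordered_field,real_algebra_1} set \<Rightarrow> ((nat \<Rightarrow> nat) \<Rightarrow> 'a \<Rightarrow> 'a) \<Rightarrow> bool" where
  "extension_axioms Nn ext \<longleftrightarrow>
     (\<forall>f. nondecr f \<longrightarrow>
        (\<forall>\<nu>\<in>Nn. ext f \<nu> \<in> Nn) \<and>
        (\<forall>n\<ge>1. ext f (of_nat n) = of_nat (f n))) \<and>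
     (\<forall>c. \<forall>\<nu>\<in>Nn. ext (\<lambda>_. c) \<nu> = of_nat c) \<and>
     (\<forall>\<nu>\<in>Nn. ext id \<nu> = \<nu>) \<and>
     (\<forall>f g. nondecr f \<longrightarrow> nondecr g \<longrightarrow>
        (ev_eq f g \<longrightarrow> (\<forall>\<nu>\<in>Nn - range of_nat. ext f \<nu> = ext g \<nu>)) \<and>
        (ev_less f g \<longrightarrow> (\<forall>\<nu>\<in>Nn - range of_nat. ext f \<nu> < ext g \<nu>)) \<and>
        (\<forall>\<nu>\<in>Nn. ext (\<lambda>n. f n + g n) \<nu> = ext f \<nu> + ext g \<nu>) \<and>
        (\<forall>\<nu>\<in>Nn. ext (\<lambda>n. f n * g n) \<nu> = ext f \<nu> * ext g \<nu>) \<and>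
        ((\<forall>n\<ge>1. g n \<ge> 1) \<longrightarrow> (\<forall>\<nu>\<in>Nn. ext (f \<circ> g) \<nu> = ext f (ext g \<nu>))))"

definition magnum :: "((nat \<Rightarrow> nat) \<Rightarrow> 'a \<Rightarrow> 'a) \<Rightarrow> 'a \<Rightarrow> nat set \<Rightarrow> 'a" where
  "magnum ext \<omega> A = ext (kappa A) \<omega>"

definition infinitesimal :: "'a::{linordered_field,real_algebra_1} \<Rightarrow> bool" where
  "infinitesimal x \<longleftrightarrow> (\<forall>r::real. r > 0 \<longrightarrow> \<bar>x\<bar> < of_real r)"

definition small_o :: "'a::{linordered_field,real_algebra_1} \<Rightarrow> 'a \<Rightarrow> bool" where
  "small_o \<omega> w \<longleftrightarrow> infinitesimal (w / \<omega>)"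

end

theory Submission
  imports Defs
begin

text \<open>
  The extension operator only acts on \<nat>-valued sequences, so real multiples of \<omega> are
  approached through fractions p/q: if kappa_A(n)/n < p/q eventually, then
  q kappa_A(n) < p n eventually, and the Axiom of Extension (with additivity and
  multiplicativity) turns this into q m(A) < p \<omega>, i.e. m(A) < (p/q) \<omega>; symmetrically
  from below.  Squeezing fractions towards \<rho> gives |m(A) - \<rho> \<omega>| < r \<omega> for every
  real r > 0.  Nothing here uses special properties of kappa_A or \<omega>: the same holds
  for every nondecreasing f with f(n)/n \<longrightarrow> \<rho> and every infinite surnatural \<nu>.
\<close>

lemma nondecr_const: "nondecr (\<lambda>_. c)"
  by (simp add: nondecr_def mono_on_def)

lemma nondecr_id: "nondecr id"
  by (simp add: nondecr_def mono_on_def)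

lemma nondecr_kappa: "nondecr (kappa A)"
  unfolding nondecr_def mono_on_def kappa_def by (auto intro!: card_mono)

lemma nondecr_scale: "nondecr f \<Longrightarrow> nondecr (\<lambda>n. c * f n)"
  unfolding nondecr_def mono_on_def by auto

lemma surnat_of_real_strict_mono:
  fixes Nn :: "'a::{linordered_field,real_algebra_1} set"
  assumes "surnat_axioms Nn \<omega>" and "r < s"
  shows "(of_real r :: 'a) < of_real s"
  using assms unfolding surnat_axioms_def by blast

lemma surnat_nonneg: "surnat_axioms Nn \<omega> \<Longrightarrow> x \<in> Nn \<Longrightarrow> 0 \<le> x"
  unfolding surnat_axioms_def by blast

lemma surnat_infinite_pos:
  assumes "surnat_axioms Nn \<omega>" and "\<nu> \<in> Nn - range of_nat"
  shows "0 < \<nu>"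
proof -
  have "\<nu> \<noteq> of_nat 0" using assms(2) by blast
  then show ?thesis using surnat_nonneg[OF assms(1)] assms(2) by fastforce
qed

lemma ext_in_surnat: "extension_axioms Nn ext \<Longrightarrow> nondecr f \<Longrightarrow> \<nu> \<in> Nn \<Longrightarrow> ext f \<nu> \<in> Nn"
  unfolding extension_axioms_def by blast

lemma ext_scale:
  assumes "extension_axioms Nn ext" and "nondecr f" and "\<nu> \<in> Nn"
  shows "ext (\<lambda>n. c * f n) \<nu> = of_nat c * ext f \<nu>"
proof -
  have "ext (\<lambda>n. (\<lambda>_. c) n * f n) \<nu> = ext (\<lambda>_. c) \<nu> * ext f \<nu>"
    using assms nondecr_const[of c] unfolding extension_axioms_def by blast
  moreover have "ext (\<lambda>_. c) \<nu> = of_nat c"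
    using assms unfolding extension_axioms_def by blast
  ultimately show ?thesis by simp
qed

lemma ext_linear:
  assumes ea: "extension_axioms Nn ext" and "\<nu> \<in> Nn"
  shows "ext (\<lambda>n. c * n) \<nu> = of_nat c * \<nu>"
proof -
  have "ext (\<lambda>n. c * id n) \<nu> = of_nat c * ext id \<nu>"
    by (rule ext_scale[OF ea nondecr_id assms(2)])
  moreover have "ext id \<nu> = \<nu>"
    using assms unfolding extension_axioms_def by blast
  ultimately show ?thesis by simp
qed

lemma ext_strict_mono_eventually:
  assumes "extension_axioms Nn ext" and "nondecr f" and "nondecr g"
    and "\<forall>\<^sub>F n in sequentially. f n < g n" and "\<nu> \<in> Nn - range of_nat"
  shows "ext f \<nu> < ext g \<nu>"
proof -
  have "ev_less f g"
    using assms(4) unfolding ev_less_def eventually_sequentially .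
  then show ?thesis
    using assms unfolding extension_axioms_def by blast
qed

lemma fraction_less_fraction_iff:
  fixes a b c d :: nat
  assumes "b > 0" and "d > 0"
  shows "real a / real b < real c / real d \<longleftrightarrow> a * d < c * b"
proof -
  have "real a / real b < real c / real d \<longleftrightarrow> real (a * d) < real (c * b)"
    using assms by (simp add: divide_simps)
  then show ?thesis by linarith
qed

lemma ext_less_fraction_mult:
  assumes ea: "extension_axioms Nn ext" and f: "nondecr f" and \<nu>: "\<nu> \<in> Nn - range of_nat"
    and "q > 0" and "\<forall>\<^sub>F n in sequentially. real (f n) / real n < real p / real q"
  shows "of_nat q * ext f \<nu> < of_nat p * \<nu>"
proof -
  have "\<forall>\<^sub>F n in sequentially. q * f n < p * n"
    using assms(5) eventually_gt_at_top[of 0]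
    by eventually_elim (use \<open>q > 0\<close> in \<open>simp add: fraction_less_fraction_iff mult.commute\<close>)
  then have "ext (\<lambda>n. q * f n) \<nu> < ext (\<lambda>n. p * n) \<nu>"
    by (intro ext_strict_mono_eventually[OF ea _ _ _ \<nu>] nondecr_scale f
        nondecr_id[unfolded id_def])
  with \<nu> show ?thesis by (simp add: ext_scale[OF ea f] ext_linear[OF ea])
qed

lemma fraction_mult_less_ext:
  assumes ea: "extension_axioms Nn ext" and f: "nondecr f" and \<nu>: "\<nu> \<in> Nn - range of_nat"
    and "q > 0" and "\<forall>\<^sub>F n in sequentially. real p / real q < real (f n) / real n"
  shows "of_nat p * \<nu> < of_nat q * ext f \<nu>"
proof -
  have "\<forall>\<^sub>F n in sequentially. p * n < q * f n"
    using assms(5) eventually_gt_at_top[of 0]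
    by eventually_elim (use \<open>q > 0\<close> in \<open>simp add: fraction_less_fraction_iff mult.commute\<close>)
  then have "ext (\<lambda>n. p * n) \<nu> < ext (\<lambda>n. q * f n) \<nu>"
    by (intro ext_strict_mono_eventually[OF ea _ _ _ \<nu>] nondecr_scale f
        nondecr_id[unfolded id_def])
  with \<nu> show ?thesis by (simp add: ext_scale[OF ea f] ext_linear[OF ea])
qed

lemma fraction_between:
  fixes a b :: real
  assumes "0 \<le> a" and "a < b"
  obtains p q :: nat where "q > 0" and "a < real p / real q" and "real p / real q < b"
proof -
  obtain x where x: "x \<in> \<rat>" "a < x" "x < b"
    using Rats_dense_in_real[OF assms(2)] by blast
  obtain p q :: nat where "q \<noteq> 0" "\<bar>x\<bar> = real p / real q"
    using Rats_abs_nat_div_natE[OF x(1)] by metis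
  with x assms(1) that show ?thesis by auto
qed

lemma of_nat_mult_of_real_fraction:
  assumes "q > 0"
  shows "of_nat q * of_real (real p / real q) = (of_nat p :: 'a::{field,real_algebra_1})"
proof -
  have "of_nat q * (of_real (real p / real q) :: 'a) = of_real (real q * (real p / real q))"
    by (simp only: of_real_mult of_real_of_nat_eq)
  also have "\<dots> = of_nat p" using assms by simp
  finally show ?thesis .
qed

lemma ext_less_of_real_mult:
  fixes \<nu> :: "'a::{linordered_field,real_algebra_1}"
  assumes sn: "surnat_axioms Nn \<omega>" and ea: "extension_axioms Nn ext" and f: "nondecr f"
    and \<nu>: "\<nu> \<in> Nn - range of_nat"
    and lim: "(\<lambda>n. real (f n) / real n) \<longlonglongrightarrow> \<rho>" and "\<rho> < x"
  shows "ext f \<nu> < of_real x * \<nu>"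
proof -
  have \<nu>_pos: "0 < \<nu>" using surnat_infinite_pos[OF sn \<nu>] .
  have "0 \<le> \<rho>" by (rule LIMSEQ_le_const[OF lim]) auto
  then obtain p q :: nat where pq: "q > 0" "\<rho> < real p / real q" "real p / real q < x"
    using fraction_between \<open>\<rho> < x\<close> by blast
  define y where "y = real p / real q"
  have "of_nat q * ext f \<nu> < of_nat p * \<nu>"
    using ext_less_fraction_mult[OF ea f \<nu> pq(1)] order_tendstoD(2)[OF lim pq(2)] by blast
  also have "\<dots> = of_nat q * (of_real y * \<nu>)"
    unfolding y_def by (simp add: of_nat_mult_of_real_fraction[OF pq(1)] flip: mult.assoc)
  finally have "ext f \<nu> < of_real y * \<nu>"
    using pq(1) by (simp add: mult_less_cancel_left)
  also have "\<dots> < of_real x * \<nu>"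
    using surnat_of_real_strict_mono[OF sn pq(3)] \<nu>_pos unfolding y_def by simp
  finally show ?thesis .
qed

lemma of_real_mult_less_ext:
  fixes \<nu> :: "'a::{linordered_field,real_algebra_1}"
  assumes sn: "surnat_axioms Nn \<omega>" and ea: "extension_axioms Nn ext" and f: "nondecr f"
    and \<nu>: "\<nu> \<in> Nn - range of_nat"
    and lim: "(\<lambda>n. real (f n) / real n) \<longlonglongrightarrow> \<rho>" and "x < \<rho>"
  shows "of_real x * \<nu> < ext f \<nu>"
proof (cases "x < 0")
  case True
  have "of_real x < (0::'a)"
    using surnat_of_real_strict_mono[OF sn True] by simp
  then have "of_real x * \<nu> < 0"
    using surnat_infinite_pos[OF sn \<nu>] by (rule mult_neg_pos)
  also have "0 \<le> ext f \<nu>"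
    using surnat_nonneg[OF sn ext_in_surnat[OF ea f]] \<nu> by blast
  finally show ?thesis .
next
  case False
  have \<nu>_pos: "0 < \<nu>" using surnat_infinite_pos[OF sn \<nu>] .
  have "0 \<le> x" using False by simp
  then obtain p q :: nat where pq: "q > 0" "x < real p / real q" "real p / real q < \<rho>"
    using fraction_between \<open>x < \<rho>\<close> by blast
  define y where "y = real p / real q"
  have "of_nat q * (of_real y * \<nu>) = of_nat p * \<nu>"
    unfolding y_def by (simp add: of_nat_mult_of_real_fraction[OF pq(1)] flip: mult.assoc)
  also have "\<dots> < of_nat q * ext f \<nu>"
    using fraction_mult_less_ext[OF ea f \<nu> pq(1)] order_tendstoD(1)[OF lim pq(3)] by blast
  finally have y_less: "of_real y * \<nu> < ext f \<nu>"
    using pq(1) by (simp add: mult_less_cancel_left)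
  have "of_real x * \<nu> < of_real y * \<nu>"
    using surnat_of_real_strict_mono[OF sn pq(2)] \<nu>_pos unfolding y_def by simp
  also note y_less
  finally show ?thesis .
qed

lemma ext_density_small_o:
  fixes \<nu> :: "'a::{linordered_field,real_algebra_1}"
  assumes sn: "surnat_axioms Nn \<omega>" and ea: "extension_axioms Nn ext" and f: "nondecr f"
    and \<nu>: "\<nu> \<in> Nn - range of_nat"
    and lim: "(\<lambda>n. real (f n) / real n) \<longlonglongrightarrow> \<rho>"
  shows "small_o \<nu> (ext f \<nu> - of_real \<rho> * \<nu>)"
  unfolding small_o_def infinitesimal_def
proof (intro allI impI)
  fix r :: real
  assume "r > 0"
  have "ext f \<nu> < of_real (\<rho> + r) * \<nu>"
    by (rule ext_less_of_real_mult[OF sn ea f \<nu> lim]) (use \<open>r > 0\<close> in simp)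
  then have upper: "ext f \<nu> - of_real \<rho> * \<nu> < of_real r * \<nu>"
    by (simp add: of_real_add distrib_right)
  have "of_real (\<rho> - r) * \<nu> < ext f \<nu>"
    by (rule of_real_mult_less_ext[OF sn ea f \<nu> lim]) (use \<open>r > 0\<close> in simp)
  then have lower: "- (of_real r * \<nu>) < ext f \<nu> - of_real \<rho> * \<nu>"
    by (simp add: of_real_diff left_diff_distrib)
  from upper lower have "\<bar>ext f \<nu> - of_real \<rho> * \<nu>\<bar> < of_real r * \<nu>"
    by (simp add: abs_less_iff)
  then show "\<bar>(ext f \<nu> - of_real \<rho> * \<nu>) / \<nu>\<bar> < of_real r"
    using surnat_infinite_pos[OF sn \<nu>] by (simp add: abs_divide pos_divide_less_eq)
qed

theorem theorem6p7:
  fixes Nn :: "'a::{linordered_field,real_algebra_1} set"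
    and \<omega> :: 'a
    and ext :: "(nat \<Rightarrow> nat) \<Rightarrow> 'a \<Rightarrow> 'a"
    and A :: "nat set" and \<rho> :: real
  assumes "surnat_axioms Nn \<omega>"
    and "extension_axioms Nn ext"
    and "A \<subseteq> {1..}"
    and "(\<lambda>n. real (kappa A n) / real n) \<longlonglongrightarrow> \<rho>"
  shows "small_o \<omega> (magnum ext \<omega> A - of_real \<rho> * \<omega>)"
proof -
  have "\<omega> \<in> Nn - range of_nat"
    using assms(1) unfolding surnat_axioms_def by (auto simp: less_irrefl)
  then show ?thesis
    unfolding magnum_def
    using ext_density_small_o[OF assms(1,2) nondecr_kappa _ assms(4)] by blast
qed

end
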